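(* Let $n\ge 2$, let $A\in\mathbb{R}^{n\times n}$ be symmetric positive definite, $B=A^{1/2}$, and $E=\{x\in\mathbb{R}^n: x^{\top}A^{-1}x=1\}$. For every parallelepiped $P$ inscribed in $E$, \[ L(P)\ \le\ L_{\max}(E):=2^{n}\sqrt{\operatorname{tr}(A)}. \] Equality holds if and only if the edge vectors of $P$ are $v_i=\lambda_iBu_i$ where $U=[u_1\ \cdots\ u_n]\in O(n)$, $\lambda_i>0$, $\sum_i\lambda_i^2=4$, and \[ \lambda_i\ \propto\ \sqrt{u_i^{\top}A\,u_i}\qquad(i=1,\dots,n). \] In particular, for any $U\in O(n)$ the choice \[ \lambda_i=\frac{2\,\sqrt{u_i^{\top}A\,u_i}}{\sqrt{\operatorname{tr}(A)}} \] yields a parallelepiped with edge vectors $v_i=\lambda_iBu_i$ that is inscribed in $E$ and attains $L(P)=L_{\max}(E)$.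
   Context: A (centred, $n$-dimensional) parallelepiped with linearly independent edge vectors $v_1,\dots,v_n\in\mathbb{R}^n$ is $P=\{\sum_{i=1}^n t_iv_i : |t_i|\le \tfrac12\}$; its $2^n$ vertices are $\tfrac12\sum_i\varepsilon_iv_i$, $\varepsilon\in\{\pm1\}^n$. $P$ is inscribed in $E$ if all its vertices satisfy $x^{\top}A^{-1}x=1$. The total edge length (total $1$-dimensional measure of the $1$-skeleton) is $L(P)=2^{n-1}\sum_{i=1}^n\|v_i\|$. *)

theory Defs
  imports "HOL-Analysis.Analysis"
begin

definition sym_pos_def_mat :: "real^'n^'n \<Rightarrow> bool" where
  "sym_pos_def_mat A \<longleftrightarrow> transpose A = A \<and> (\<forall>x. x \<noteq> 0 \<longrightarrow> x \<bullet> (A *v x) > 0)"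

definition lin_indep_family :: "('n \<Rightarrow> real^'n) \<Rightarrow> bool" where
  "lin_indep_family v \<longleftrightarrow> inj v \<and> independent (range v)"

definition ppd_vertices :: "('n::finite \<Rightarrow> real^'n) \<Rightarrow> (real^'n) set" where
  "ppd_vertices v = {(1/2) *\<^sub>R (\<Sum>i\<in>UNIV. eps i *\<^sub>R v i) | eps. \<forall>i. eps i \<in> {-1, 1}}"

definition inscribed :: "real^'n^'n \<Rightarrow> ('n::finite \<Rightarrow> real^'n) \<Rightarrow> bool" where
  "inscribed A v \<longleftrightarrow> (\<forall>x\<in>ppd_vertices v. x \<bullet> (matrix_inv A *v x) = 1)"

definition total_edge_length :: "('n::finite \<Rightarrow> real^'n) \<Rightarrow> real" where
  "total_edge_length v = 2 ^ (CARD('n) - 1) * (\<Sum>i\<in>UNIV. norm (v i))"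

end

theory Submission
  imports Defs
begin

text \<open>
  Put \<open>w\<^sub>i = B\<^sup>-\<^sup>1 v\<^sub>i\<close>. Since \<open>x\<^sup>T A\<^sup>-\<^sup>1 x = |B\<^sup>-\<^sup>1 x|\<^sup>2\<close>, the parallelepiped is inscribed
  iff every sign sum \<open>\<Sum> \<epsilon>\<^sub>i w\<^sub>i\<close> has squared length 4; comparing sign patterns that
  differ in one or two places shows that this means exactly that the \<open>w\<^sub>i\<close> are pairwise
  orthogonal with \<open>\<Sum> |w\<^sub>i|\<^sup>2 = 4\<close>, i.e. \<open>w\<^sub>i = \<lambda>\<^sub>i u\<^sub>i\<close> for an orthogonal matrix \<open>U\<close> and
  \<open>\<Sum> \<lambda>\<^sub>i\<^sup>2 = 4\<close>. Then \<open>|v\<^sub>i| = \<lambda>\<^sub>i |B u\<^sub>i| = \<lambda>\<^sub>i a\<^sub>i\<close> with \<open>a\<^sub>i = (u\<^sub>i\<^sup>T A u\<^sub>i)\<^sup>1\<^sup>/\<^sup>2\<close>, and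
  \<open>\<Sum> a\<^sub>i\<^sup>2 = tr A\<close> because \<open>U\<close> is orthogonal, so Cauchy--Schwarz gives
  \<open>\<Sum> |v\<^sub>i| \<le> 2 (tr A)\<^sup>1\<^sup>/\<^sup>2\<close>, with equality exactly when \<open>\<lambda>\<close> is proportional to \<open>a\<close>.
\<close>

lemma matrix_inv_right:
  fixes B :: "'a::semiring_1^'n^'n"
  assumes "invertible B"
  shows "B ** matrix_inv B = mat 1"
  using someI_ex[OF assms[unfolded invertible_def]] unfolding matrix_inv_def by blast

lemma symmetric_matrix_inner:
  fixes B :: "real^'n^'n"
  assumes "transpose B = B"
  shows "(B *v x) \<bullet> y = x \<bullet> (B *v y)"
  by (metis assms dot_lmul_matrix inner_commute transpose_matrix_vector)

lemma matrix_vector_mult_sum: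
  fixes B :: "real^'n::finite^'m::finite"
  shows "B *v (\<Sum>i\<in>I. f i) = (\<Sum>i\<in>I. B *v f i)"
  by (simp add: linear_sum[OF matrix_vector_mul_linear] o_def)

lemma quadratic_form_matrix_inv_square:
  fixes A B :: "real^'n^'n"
  assumes "transpose B = B" "invertible B" "B ** B = A"
  shows "(B *v y) \<bullet> (matrix_inv A *v (B *v y)) = y \<bullet> y"
proof -
  define z where "z = matrix_inv A *v (B *v y)"
  have "invertible A" using invertible_mult assms by metis
  have "B *v (B *v z) = (A ** matrix_inv A) *v (B *v y)"
    unfolding z_def by (metis matrix_vector_mul_assoc assms(3))
  also have "\<dots> = B *v y"
    using \<open>invertible A\<close> by (simp add: matrix_inv_right)
  finally have "B *v (B *v z) = B *v y" .
  then have "B *v z = y"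
    using assms(2) by (metis matrix_left_invertible_injective invertible_left_inverse injD)
  then show ?thesis
    using symmetric_matrix_inner[OF assms(1)] unfolding z_def by metis
qed

lemma norm_matrix_vector_mult_square_root:
  fixes A B :: "real^'n^'n"
  assumes "transpose B = B" "B ** B = A"
  shows "norm (B *v u) = sqrt (u \<bullet> (A *v u))"
  by (simp add: norm_eq_sqrt_inner symmetric_matrix_inner[OF assms(1)]
      matrix_vector_mul_assoc assms(2))

lemma trace_eq_sum_column_quadratic_forms:
  fixes A U :: "real^'n^'n"
  assumes "orthogonal_matrix U"
  shows "trace A = (\<Sum>i\<in>UNIV. column i U \<bullet> (A *v column i U))"
proof -
  have "trace A = trace (transpose U ** (A ** U))"
    using assms unfolding orthogonal_matrix_def
    by (metis trace_mul_sym matrix_mul_assoc matrix_mul_rid)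
  also have "\<dots> = (\<Sum>i\<in>UNIV. column i U \<bullet> (A *v column i U))"
    unfolding trace_def
    by (simp add: matrix_matrix_mult_def matrix_vector_mult_def column_def inner_vec_def
        transpose_def sum_distrib_left mult.commute)
  finally show ?thesis .
qed

lemma sym_pos_def_mat_transpose:
  assumes "sym_pos_def_mat B"
  shows "transpose B = B"
  using assms unfolding sym_pos_def_mat_def by blast

lemma sym_pos_def_mat_inj:
  assumes "sym_pos_def_mat B"
  shows "inj ((*v) B)"
proof (rule linear_injective_0[OF matrix_vector_mul_linear, THEN iffD2], intro allI impI)
  fix x assume "B *v x = 0"
  then show "x = 0"
    using assms unfolding sym_pos_def_mat_def by (metis inner_zero_right less_irrefl)
qed

lemma sym_pos_def_mat_invertible:
  assumes "sym_pos_def_mat B"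
  shows "invertible B"
  using sym_pos_def_mat_inj[OF assms] matrix_left_invertible_injective invertible_left_inverse
  by blast

lemma sym_pos_def_mat_trace_pos:
  assumes "sym_pos_def_mat A"
  shows "trace A > 0"
proof -
  have "A $ i $ i = axis i 1 \<bullet> (A *v axis i 1)" for i
    unfolding inner_axis' by (simp add: matrix_vector_mult_def axis_def if_distrib cong: if_cong)
  then have "A $ i $ i > 0" for i
    using assms unfolding sym_pos_def_mat_def by (simp add: axis_eq_0_iff)
  then show ?thesis unfolding trace_def by (simp add: sum_pos)
qed

lemma sym_pos_def_mat_column_quadratic_form_pos:
  fixes A U :: "real^'n::finite^'n"
  assumes "sym_pos_def_mat A" "orthogonal_matrix U"
  shows "column i U \<bullet> (A *v column i U) > 0"
proof -
  have "column i U \<noteq> 0"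
    using assms(2) unfolding orthogonal_matrix_orthonormal_columns by (metis norm_zero zero_neq_one)
  then show ?thesis
    using assms(1) unfolding sym_pos_def_mat_def by blast
qed

lemma sum_sqrt_column_quadratic_forms_squared:
  fixes A U :: "real^'n::finite^'n"
  assumes "sym_pos_def_mat A" "orthogonal_matrix U"
  shows "(\<Sum>i\<in>UNIV. (sqrt (column i U \<bullet> (A *v column i U)))\<^sup>2) = trace A"
  unfolding trace_eq_sum_column_quadratic_forms[OF assms(2), of A]
  using sym_pos_def_mat_column_quadratic_form_pos[OF assms] by (simp add: less_imp_le)

section \<open>Sign sums and Cauchy--Schwarz\<close>

lemma sum_sign_flip:
  fixes w :: "'i::finite \<Rightarrow> 'a::real_vector"
  shows "(\<Sum>k\<in>UNIV. (if k \<in> F then -1 else 1) *\<^sub>R w k) = (\<Sum>k\<in>UNIV. w k) - 2 *\<^sub>R (\<Sum>k\<in>F. w k)"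
proof -
  have "(\<Sum>k\<in>UNIV. (if k \<in> F then -1 else 1) *\<^sub>R w k) = (\<Sum>k\<in>UNIV. w k - 2 *\<^sub>R (if k \<in> F then w k else 0))"
    by (intro sum.cong) (auto simp: scaleR_2)
  also have "\<dots> = (\<Sum>k\<in>UNIV. w k) - 2 *\<^sub>R (\<Sum>k\<in>F. w k)"
    by (simp add: sum_subtractf scaleR_sum_right[symmetric] sum.If_cases)
  finally show ?thesis .
qed

lemma norm_sign_sums_eq_iff_pairwise_orthogonal:
  fixes w :: "'i::finite \<Rightarrow> 'a::real_inner"
  shows "(\<forall>e. (\<forall>i. e i \<in> {-1, 1}) \<longrightarrow> (norm (\<Sum>i\<in>UNIV. e i *\<^sub>R w i))\<^sup>2 = r) \<longleftrightarrow>
         pairwise (\<lambda>i j. orthogonal (w i) (w j)) UNIV \<and> (\<Sum>i\<in>UNIV. (norm (w i))\<^sup>2) = r"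
proof
  assume signs: "\<forall>e. (\<forall>i. e i \<in> {-1, 1}) \<longrightarrow> (norm (\<Sum>i\<in>UNIV. e i *\<^sub>R w i))\<^sup>2 = r"
  define S where "S = (\<Sum>k\<in>UNIV. w k)"
  \<comment> \<open>Negating the signs on \<open>F\<close> subtracts \<open>2 \<Sum>\<^sub>F w\<close>; the cases \<open>F = {}, {i}, {i, j}\<close>
      isolate \<open>w i \<bullet> w j\<close>.\<close>
  have flip: "(norm (S - 2 *\<^sub>R (\<Sum>k\<in>F. w k)))\<^sup>2 = r" for F
    using signs[rule_format, of "\<lambda>k. if k \<in> F then -1 else 1"]
    by (simp add: sum_sign_flip S_def)
  have S: "S \<bullet> S = r" using flip[of "{}"] by (simp add: power2_norm_eq_inner)
  have Sw: "S \<bullet> w i = w i \<bullet> w i" for i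
    using flip[of "{i}"] S by (simp add: power2_norm_eq_inner algebra_simps inner_commute)
  have orth: "pairwise (\<lambda>i j. orthogonal (w i) (w j)) UNIV"
  proof (rule pairwiseI)
    fix i j :: 'i assume "i \<noteq> j"
    then have "(norm (S - 2 *\<^sub>R (w i + w j)))\<^sup>2 = r" using flip[of "{i, j}"] by simp
    then show "orthogonal (w i) (w j)"
      using S Sw[of i] Sw[of j] unfolding orthogonal_def
      by (simp add: power2_norm_eq_inner algebra_simps inner_commute)
  qed
  moreover have "(\<Sum>i\<in>UNIV. (norm (w i))\<^sup>2) = r"
    using S norm_sum_Pythagorean[OF finite orth] by (simp add: S_def power2_norm_eq_inner)
  ultimately show "pairwise (\<lambda>i j. orthogonal (w i) (w j)) UNIV \<and> (\<Sum>i\<in>UNIV. (norm (w i))\<^sup>2) = r" ..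
next
  assume orth: "pairwise (\<lambda>i j. orthogonal (w i) (w j)) UNIV \<and> (\<Sum>i\<in>UNIV. (norm (w i))\<^sup>2) = r"
  show "\<forall>e. (\<forall>i. e i \<in> {-1, 1}) \<longrightarrow> (norm (\<Sum>i\<in>UNIV. e i *\<^sub>R w i))\<^sup>2 = r"
  proof (intro allI impI)
    fix e :: "'i \<Rightarrow> real" assume "\<forall>i. e i \<in> {-1, 1}"
    then have "\<bar>e i\<bar> = 1" for i by (metis abs_1 abs_minus_cancel insert_iff singletonD)
    then show "(norm (\<Sum>i\<in>UNIV. e i *\<^sub>R w i))\<^sup>2 = r"
      using orth by (simp add: norm_sum_Pythagorean pairwise_def orthogonal_clauses)
  qed
qed

lemma sum_mult_le_sqrt_sum_squares:
  fixes l a :: "'i::finite \<Rightarrow> real"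
  shows "(\<Sum>i\<in>UNIV. l i * a i) \<le> sqrt (\<Sum>i\<in>UNIV. (l i)\<^sup>2) * sqrt (\<Sum>i\<in>UNIV. (a i)\<^sup>2)"
proof -
  have "(\<Sum>i\<in>UNIV. l i * a i) \<le> (\<Sum>i\<in>UNIV. \<bar>l i\<bar> * \<bar>a i\<bar>)"
    by (intro sum_mono) (simp add: abs_mult[symmetric])
  also have "\<dots> \<le> sqrt (\<Sum>i\<in>UNIV. (l i)\<^sup>2) * sqrt (\<Sum>i\<in>UNIV. (a i)\<^sup>2)"
    using L2_set_mult_ineq[of l a UNIV] by (simp add: L2_set_def)
  finally show ?thesis .
qed

lemma sum_mult_eq_sqrt_sum_squares_iff:
  fixes l a :: "'i::finite \<Rightarrow> real"
  assumes "a i\<^sub>0 \<noteq> 0"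
  shows "(\<Sum>i\<in>UNIV. l i * a i) = sqrt (\<Sum>i\<in>UNIV. (l i)\<^sup>2) * sqrt (\<Sum>i\<in>UNIV. (a i)\<^sup>2) \<longleftrightarrow>
         (\<exists>c\<ge>0. \<forall>i. l i = c * a i)"
proof -
  define x :: "real^'i" where "x = (\<chi> i. l i)"
  define y :: "real^'i" where "y = (\<chi> i. a i)"
  have xy: "x \<bullet> y = (\<Sum>i\<in>UNIV. l i * a i)"
    unfolding x_def y_def inner_vec_def by simp
  have norms: "norm x = sqrt (\<Sum>i\<in>UNIV. (l i)\<^sup>2)" "norm y = sqrt (\<Sum>i\<in>UNIV. (a i)\<^sup>2)"
    unfolding norm_eq_sqrt_inner x_def y_def inner_vec_def by (simp_all add: power2_eq_square)
  have "y \<noteq> 0" using assms unfolding y_def by (metis vec_lambda_beta zero_index)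
  then have "norm x *\<^sub>R y = norm y *\<^sub>R x \<longleftrightarrow> (\<exists>c\<ge>0. x = c *\<^sub>R y)"
  proof safe
    assume parallel: "norm x *\<^sub>R y = norm y *\<^sub>R x"
    have "x = (1 / norm y) *\<^sub>R (norm y *\<^sub>R x)"
      using \<open>y \<noteq> 0\<close> by simp
    also have "\<dots> = (norm x / norm y) *\<^sub>R y"
      unfolding parallel[symmetric] by simp
    finally have "x = (norm x / norm y) *\<^sub>R y" .
    then show "\<exists>c\<ge>0. x = c *\<^sub>R y" by (meson divide_nonneg_nonneg norm_ge_zero)
  next
    fix c :: real assume "c \<ge> 0" "x = c *\<^sub>R y"
    then show "norm (c *\<^sub>R y) *\<^sub>R y = norm y *\<^sub>R c *\<^sub>R y" by simp
  qed
  also have "\<dots> \<longleftrightarrow> (\<exists>c\<ge>0. \<forall>i. l i = c * a i)"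
    unfolding x_def y_def by (simp add: vec_eq_iff)
  finally show ?thesis
    using norm_cauchy_schwarz_eq[of x y] xy norms by simp
qed

lemma lin_indep_family_nonzero:
  assumes "lin_indep_family v"
  shows "v i \<noteq> 0"
  using assms dependent_zero[of "range v"] unfolding lin_indep_family_def by (metis rangeI)

lemma lin_indep_family_pairwise_orthogonal:
  fixes w :: "'n::finite \<Rightarrow> real^'n"
  assumes orth: "pairwise (\<lambda>i j. orthogonal (w i) (w j)) UNIV" and nz: "\<And>i. w i \<noteq> 0"
  shows "lin_indep_family w"
  unfolding lin_indep_family_def
proof
  show "inj w"
  proof (rule injI, rule ccontr)
    fix i j assume "w i = w j" "i \<noteq> j"
    then have "w i \<bullet> w i = 0"
      using orth unfolding pairwise_def orthogonal_def by (metis UNIV_I)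
    with nz show False by simp
  qed
  show "independent (range w)"
    using orth nz by (intro pairwise_orthogonal_independent) (auto simp: pairwise_def, metis)
qed

lemma lin_indep_family_matrix_image:
  fixes B :: "real^'n::finite^'n"
  assumes "inj ((*v) B)" "lin_indep_family w"
  shows "lin_indep_family (\<lambda>i. B *v w i)"
proof -
  have "independent ((*v) B ` range w)"
    using assms unfolding lin_indep_family_def
    by (intro linear_independent_injective_image[OF matrix_vector_mul_linear])
       (auto intro: inj_on_subset)
  moreover have "inj (\<lambda>i. B *v w i)"
    using assms unfolding lin_indep_family_def by (simp add: inj_compose[unfolded comp_def])
  ultimately show ?thesis
    unfolding lin_indep_family_def by (simp add: image_image)
qed

lemma orthogonal_matrix_normalized_columns:
  fixes w :: "'n::finite \<Rightarrow> real^'n"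
  assumes orth: "pairwise (\<lambda>i j. orthogonal (w i) (w j)) UNIV" and nz: "\<And>i. w i \<noteq> 0"
  obtains U where "orthogonal_matrix U" "\<And>i. w i = norm (w i) *\<^sub>R column i U"
proof
  define U :: "real^'n^'n" where "U = (\<chi> r i. w i $ r / norm (w i))"
  have column: "column i U = (1 / norm (w i)) *\<^sub>R w i" for i
    unfolding U_def column_def by (simp add: vec_eq_iff)
  show "orthogonal_matrix U"
    unfolding orthogonal_matrix_orthonormal_columns column
    using orth nz by (auto simp: pairwise_def orthogonal_clauses)
  show "w i = norm (w i) *\<^sub>R column i U" for i
    using nz[of i] by (simp add: column)
qed

section \<open>Inscribed parallelepipeds\<close>

lemma inscribed_matrix_image_iff:
  fixes A B :: "real^'n::finite^'n" and w :: "'n \<Rightarrow> real^'n"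
  assumes "transpose B = B" "invertible B" "B ** B = A"
  shows "inscribed A (\<lambda>i. B *v w i) \<longleftrightarrow>
         pairwise (\<lambda>i j. orthogonal (w i) (w j)) UNIV \<and> (\<Sum>i\<in>UNIV. (norm (w i))\<^sup>2) = 4"
proof -
  define y where "y e = (1/2) *\<^sub>R (\<Sum>i\<in>UNIV. e i *\<^sub>R w i)" for e :: "'n \<Rightarrow> real"
  have vertex: "(1/2) *\<^sub>R (\<Sum>i\<in>UNIV. e i *\<^sub>R (B *v w i)) = B *v y e" for e
    unfolding y_def by (simp add: matrix_vector_mult_sum matrix_vector_mult_scaleR)
  have "inscribed A (\<lambda>i. B *v w i) \<longleftrightarrow>
        (\<forall>e. (\<forall>i. e i \<in> {-1, 1}) \<longrightarrow>
          (B *v y e) \<bullet> (matrix_inv A *v (B *v y e)) = 1)"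
    unfolding inscribed_def ppd_vertices_def vertex by blast
  also have "\<dots> \<longleftrightarrow> (\<forall>e. (\<forall>i. e i \<in> {-1, 1}) \<longrightarrow> (norm (\<Sum>i\<in>UNIV. e i *\<^sub>R w i))\<^sup>2 = 4)"
    unfolding quadratic_form_matrix_inv_square[OF assms] y_def
    by (simp add: power2_norm_eq_inner)
  also have "\<dots> \<longleftrightarrow> pairwise (\<lambda>i j. orthogonal (w i) (w j)) UNIV \<and> (\<Sum>i\<in>UNIV. (norm (w i))\<^sup>2) = 4"
    by (rule norm_sign_sums_eq_iff_pairwise_orthogonal)
  finally show ?thesis .
qed

lemma inscribed_decomposition:
  fixes A B :: "real^'n::finite^'n"
  assumes B: "sym_pos_def_mat B" "B ** B = A"
    and v: "lin_indep_family v" "inscribed A v"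
  obtains U lam where "orthogonal_matrix U" "\<And>i. lam i > 0" "(\<Sum>i\<in>UNIV. (lam i)\<^sup>2) = 4"
    "\<And>i. v i = lam i *\<^sub>R (B *v column i U)"
proof -
  define w where "w i = matrix_inv B *v v i" for i
  have vw: "v = (\<lambda>i. B *v w i)"
    unfolding w_def
    by (simp add: matrix_vector_mul_assoc matrix_inv_right[OF sym_pos_def_mat_invertible[OF B(1)]])
  note inscribed_iff =
    inscribed_matrix_image_iff[OF sym_pos_def_mat_transpose[OF B(1)] sym_pos_def_mat_invertible[OF B(1)] B(2)]
  have orth: "pairwise (\<lambda>i j. orthogonal (w i) (w j)) UNIV"
    and norms: "(\<Sum>i\<in>UNIV. (norm (w i))\<^sup>2) = 4"
    using v(2) inscribed_iff unfolding vw by auto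
  have nz: "w i \<noteq> 0" for i
    using lin_indep_family_nonzero[OF v(1), of i] unfolding vw by auto
  obtain U where "orthogonal_matrix U" "\<And>i. w i = norm (w i) *\<^sub>R column i U"
    using orthogonal_matrix_normalized_columns[OF orth nz] by blast
  then show ?thesis
    using that[of U "\<lambda>i. norm (w i)"] nz norms
    by (metis matrix_vector_mult_scaleR vw zero_less_norm_iff)
qed

lemma inscribed_orthogonal_matrix_image:
  fixes A B U :: "real^'n::finite^'n"
  assumes B: "sym_pos_def_mat B" "B ** B = A" and U: "orthogonal_matrix U"
    and lam: "\<And>i. lam i > 0" "(\<Sum>i\<in>UNIV. (lam i)\<^sup>2) = 4"
  defines "v \<equiv> \<lambda>i. lam i *\<^sub>R (B *v column i U)"
  shows "lin_indep_family v \<and> inscribed A v"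
proof -
  define w where "w i = lam i *\<^sub>R column i U" for i
  have vw: "v = (\<lambda>i. B *v w i)"
    unfolding v_def w_def by (simp add: matrix_vector_mult_scaleR)
  have orth: "pairwise (\<lambda>i j. orthogonal (w i) (w j)) UNIV"
    using U unfolding w_def orthogonal_matrix_orthonormal_columns
    by (auto simp: pairwise_def orthogonal_clauses)
  have norm_w: "norm (w i) = lam i" for i
    using U lam(1)[of i] unfolding w_def orthogonal_matrix_orthonormal_columns by simp
  have "w i \<noteq> 0" for i
    using norm_w[of i] lam(1)[of i] by auto
  with orth have "lin_indep_family w"
    by (rule lin_indep_family_pairwise_orthogonal)
  then have "lin_indep_family v"
    unfolding vw using sym_pos_def_mat_inj[OF B(1)] by (intro lin_indep_family_matrix_image)
  moreover have "inscribed A v"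
    unfolding vw inscribed_matrix_image_iff[OF sym_pos_def_mat_transpose[OF B(1)] sym_pos_def_mat_invertible[OF B(1)] B(2)]
    using orth lam(2) norm_w by simp
  ultimately show ?thesis ..
qed

section \<open>Total edge length\<close>

lemma sum_norm_edges:
  fixes A B U :: "real^'n::finite^'n"
  assumes A: "sym_pos_def_mat A" and B: "transpose B = B" "B ** B = A"
    and U: "orthogonal_matrix U" and lam: "\<And>i. lam i > 0" "(\<Sum>i\<in>UNIV. (lam i)\<^sup>2) = 4"
    and v: "\<And>i. v i = lam i *\<^sub>R (B *v column i U)"
  shows "(\<Sum>i\<in>UNIV. norm (v i)) \<le> 2 * sqrt (trace A)"
    and "(\<Sum>i\<in>UNIV. norm (v i)) = 2 * sqrt (trace A) \<longleftrightarrow>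
         (\<exists>c. \<forall>i. lam i = c * sqrt (column i U \<bullet> (A *v column i U)))"
proof -
  define a where "a i = sqrt (column i U \<bullet> (A *v column i U))" for i
  have a_pos: "a i > 0" for i
    unfolding a_def using sym_pos_def_mat_column_quadratic_form_pos[OF A U] by simp
  have "(\<Sum>i\<in>UNIV. (a i)\<^sup>2) = trace A"
    unfolding a_def by (rule sum_sqrt_column_quadratic_forms_squared[OF A U])
  then have bound: "2 * sqrt (trace A) = sqrt (\<Sum>i\<in>UNIV. (lam i)\<^sup>2) * sqrt (\<Sum>i\<in>UNIV. (a i)\<^sup>2)"
    using lam(2) by simp
  have edges: "(\<Sum>i\<in>UNIV. norm (v i)) = (\<Sum>i\<in>UNIV. lam i * a i)"
    using v lam(1) unfolding a_def norm_matrix_vector_mult_square_root[OF B, symmetric]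
    by (simp add: less_imp_le)
  show "(\<Sum>i\<in>UNIV. norm (v i)) \<le> 2 * sqrt (trace A)"
    unfolding edges bound by (rule sum_mult_le_sqrt_sum_squares)
  have "(\<exists>c. \<forall>i. lam i = c * a i) \<longleftrightarrow> (\<exists>c\<ge>0. \<forall>i. lam i = c * a i)"
    using lam(1) a_pos by (metis zero_less_mult_pos2 less_imp_le)
  then show "(\<Sum>i\<in>UNIV. norm (v i)) = 2 * sqrt (trace A) \<longleftrightarrow>
         (\<exists>c. \<forall>i. lam i = c * sqrt (column i U \<bullet> (A *v column i U)))"
    unfolding edges bound
      sum_mult_eq_sqrt_sum_squares_iff[of a, OF a_pos[THEN less_imp_neq, symmetric]]
    unfolding a_def by (rule sym)
qed

lemma power_card_eq_double:
  "(2::real) ^ CARD('n::finite) = 2 ^ (CARD('n) - 1) * 2"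
  using power_minus_mult[of "CARD('n)" "2::real"] by simp

lemma total_edge_length_le_iff:
  "total_edge_length v \<le> 2 ^ CARD('n::finite) * r \<longleftrightarrow> (\<Sum>i\<in>UNIV. norm (v i :: real^'n)) \<le> 2 * r"
  unfolding total_edge_length_def power_card_eq_double by (simp add: mult.assoc)

lemma total_edge_length_eq_iff:
  "total_edge_length v = 2 ^ CARD('n::finite) * r \<longleftrightarrow> (\<Sum>i\<in>UNIV. norm (v i :: real^'n)) = 2 * r"
  unfolding total_edge_length_def power_card_eq_double by (simp add: mult.assoc)

lemma inscribed_sum_norm_edges:
  fixes A B :: "real^'n::finite^'n"
  assumes A: "sym_pos_def_mat A" and B: "sym_pos_def_mat B" "B ** B = A"
    and v: "lin_indep_family v" "inscribed A v"
  shows "(\<Sum>i\<in>UNIV. norm (v i)) \<le> 2 * sqrt (trace A)"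
    and "(\<Sum>i\<in>UNIV. norm (v i)) = 2 * sqrt (trace A) \<longleftrightarrow>
          (\<exists>U lam. orthogonal_matrix U \<and> (\<forall>i. lam i > 0) \<and> (\<Sum>i\<in>UNIV. (lam i)\<^sup>2) = 4 \<and>
             (\<exists>c. \<forall>i. lam i = c * sqrt (column i U \<bullet> (A *v column i U))) \<and>
             (\<forall>i. v i = lam i *\<^sub>R (B *v column i U)))"
proof -
  note edges = sum_norm_edges[OF A sym_pos_def_mat_transpose[OF B(1)] B(2)]
  obtain U lam where U: "orthogonal_matrix U" "\<And>i. lam i > 0" "(\<Sum>i\<in>UNIV. (lam i)\<^sup>2) = 4"
    "\<And>i. v i = lam i *\<^sub>R (B *v column i U)"
    using inscribed_decomposition[OF B v] by blast
  show "(\<Sum>i\<in>UNIV. norm (v i)) \<le> 2 * sqrt (trace A)"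
    by (rule edges(1)[OF U])
  show "(\<Sum>i\<in>UNIV. norm (v i)) = 2 * sqrt (trace A) \<longleftrightarrow>
          (\<exists>U lam. orthogonal_matrix U \<and> (\<forall>i. lam i > 0) \<and> (\<Sum>i\<in>UNIV. (lam i)\<^sup>2) = 4 \<and>
             (\<exists>c. \<forall>i. lam i = c * sqrt (column i U \<bullet> (A *v column i U))) \<and>
             (\<forall>i. v i = lam i *\<^sub>R (B *v column i U)))"
  proof
    assume "(\<Sum>i\<in>UNIV. norm (v i)) = 2 * sqrt (trace A)"
    then have "\<exists>c. \<forall>i. lam i = c * sqrt (column i U \<bullet> (A *v column i U))"
      using edges(2)[OF U] by simp
    then show "\<exists>U lam. orthogonal_matrix U \<and> (\<forall>i. lam i > 0) \<and> (\<Sum>i\<in>UNIV. (lam i)\<^sup>2) = 4 \<and>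
             (\<exists>c. \<forall>i. lam i = c * sqrt (column i U \<bullet> (A *v column i U))) \<and>
             (\<forall>i. v i = lam i *\<^sub>R (B *v column i U))"
      using U by (intro exI[of _ U] exI[of _ lam]) simp
  next
    assume "\<exists>U lam. orthogonal_matrix U \<and> (\<forall>i. lam i > 0) \<and> (\<Sum>i\<in>UNIV. (lam i)\<^sup>2) = 4 \<and>
             (\<exists>c. \<forall>i. lam i = c * sqrt (column i U \<bullet> (A *v column i U))) \<and>
             (\<forall>i. v i = lam i *\<^sub>R (B *v column i U))"
    then obtain U' lam' where U': "orthogonal_matrix U'" "\<And>i. lam' i > 0" "(\<Sum>i\<in>UNIV. (lam' i)\<^sup>2) = 4"
      "\<And>i. v i = lam' i *\<^sub>R (B *v column i U')"
      and proportional: "\<exists>c. \<forall>i. lam' i = c * sqrt (column i U' \<bullet> (A *v column i U'))"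
      by blast
    show "(\<Sum>i\<in>UNIV. norm (v i)) = 2 * sqrt (trace A)"
      using edges(2)[OF U'] proportional ..
  qed
qed

lemma extremal_parallelepiped:
  fixes A B U :: "real^'n::finite^'n"
  assumes A: "sym_pos_def_mat A" and B: "sym_pos_def_mat B" "B ** B = A"
    and U: "orthogonal_matrix U"
  defines "lam \<equiv> \<lambda>i. 2 * sqrt (column i U \<bullet> (A *v column i U)) / sqrt (trace A)"
  defines "v \<equiv> \<lambda>i. lam i *\<^sub>R (B *v column i U)"
  shows "lin_indep_family v \<and> inscribed A v \<and> (\<Sum>i\<in>UNIV. norm (v i)) = 2 * sqrt (trace A)"
proof -
  have T: "trace A > 0" by (rule sym_pos_def_mat_trace_pos[OF A])
  have lam_pos: "lam i > 0" for i
    unfolding lam_def using T sym_pos_def_mat_column_quadratic_form_pos[OF A U] by simp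
  have "(\<Sum>i\<in>UNIV. (lam i)\<^sup>2) = 4 / trace A * (\<Sum>i\<in>UNIV. (sqrt (column i U \<bullet> (A *v column i U)))\<^sup>2)"
    unfolding lam_def sum_distrib_left using T by (simp add: power_divide power_mult_distrib)
  then have lam_sq: "(\<Sum>i\<in>UNIV. (lam i)\<^sup>2) = 4"
    using T by (simp add: sum_sqrt_column_quadratic_forms_squared[OF A U])
  have "\<forall>i. lam i = 2 / sqrt (trace A) * sqrt (column i U \<bullet> (A *v column i U))"
    unfolding lam_def by simp
  then have "(\<Sum>i\<in>UNIV. norm (v i)) = 2 * sqrt (trace A)"
    using sum_norm_edges(2)[OF A sym_pos_def_mat_transpose[OF B(1)] B(2) U lam_pos lam_sq, of v]
    unfolding v_def by blast
  then show ?thesis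
    using inscribed_orthogonal_matrix_image[OF B U lam_pos lam_sq] unfolding v_def by blast
qed

theorem theorem3p1:
  fixes A B :: "real^'n::finite^'n"
  assumes n2: "CARD('n) \<ge> 2"
    and A_spd: "sym_pos_def_mat A"
    and B_sqrt: "sym_pos_def_mat B" "B ** B = A"
  shows
    "(\<forall>v :: 'n \<Rightarrow> real^'n. lin_indep_family v \<and> inscribed A v \<longrightarrow>
        total_edge_length v \<le> 2 ^ CARD('n) * sqrt (trace A))
     \<and> (\<forall>v :: 'n \<Rightarrow> real^'n. lin_indep_family v \<and> inscribed A v \<longrightarrow>
        (total_edge_length v = 2 ^ CARD('n) * sqrt (trace A) \<longleftrightarrow>
          (\<exists>U :: real^'n^'n. \<exists>lam :: 'n \<Rightarrow> real.
             orthogonal_matrix U \<and> (\<forall>i. lam i > 0) \<and> (\<Sum>i\<in>UNIV. (lam i)\<^sup>2) = 4 \<and>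
             (\<exists>c. \<forall>i. lam i = c * sqrt (column i U \<bullet> (A *v column i U))) \<and>
             (\<forall>i. v i = lam i *\<^sub>R (B *v column i U)))))
     \<and> (\<forall>U :: real^'n^'n. orthogonal_matrix U \<longrightarrow>
        (let lam = (\<lambda>i. 2 * sqrt (column i U \<bullet> (A *v column i U)) / sqrt (trace A));
             v = (\<lambda>i. lam i *\<^sub>R (B *v column i U))
         in lin_indep_family v \<and> inscribed A v \<and>
            total_edge_length v = 2 ^ CARD('n) * sqrt (trace A)))"
proof (intro conjI allI impI)
  fix v :: "'n \<Rightarrow> real^'n"
  assume "lin_indep_family v \<and> inscribed A v"
  then have v: "lin_indep_family v" "inscribed A v" by auto
  show "total_edge_length v \<le> 2 ^ CARD('n) * sqrt (trace A)"
    unfolding total_edge_length_le_iff by (rule inscribed_sum_norm_edges(1)[OF A_spd B_sqrt v])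
  show "total_edge_length v = 2 ^ CARD('n) * sqrt (trace A) \<longleftrightarrow>
          (\<exists>U lam. orthogonal_matrix U \<and> (\<forall>i. lam i > 0) \<and> (\<Sum>i\<in>UNIV. (lam i)\<^sup>2) = 4 \<and>
             (\<exists>c. \<forall>i. lam i = c * sqrt (column i U \<bullet> (A *v column i U))) \<and>
             (\<forall>i. v i = lam i *\<^sub>R (B *v column i U)))"
    unfolding total_edge_length_eq_iff by (rule inscribed_sum_norm_edges(2)[OF A_spd B_sqrt v])
next
  fix U :: "real^'n^'n" assume "orthogonal_matrix U"
  then show "let lam = (\<lambda>i. 2 * sqrt (column i U \<bullet> (A *v column i U)) / sqrt (trace A));
             v = (\<lambda>i. lam i *\<^sub>R (B *v column i U))
         in lin_indep_family v \<and> inscribed A v \<and>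
            total_edge_length v = 2 ^ CARD('n) * sqrt (trace A)"
    unfolding Let_def total_edge_length_eq_iff by (rule extremal_parallelepiped[OF A_spd B_sqrt])
qed

end
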